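(* Let $\delta_n=\frac{n+2}{n+1}$ and $\mu_n=n^{3/2}$ ($n\ge0$), let $p_n=\mu_{n+1}/\mu_n=\big(\frac{n+1}{n}\big)^{3/2}$, and let $g_n$ ($n\ge1$) be defined by $g_1=\frac{\mu_2}{\mu_1}\big(\frac{2\delta_2}{\delta_3}+\frac{\delta_1}{\delta_3}+1\big)-\frac{\mu_3}{\mu_1}$ and, for $n\ge2$, $$g_n=\frac{\mu_{n+1}}{\mu_n\delta_{n+1}\delta_{n+2}}\Big[2\delta_{n+1}^2+\delta_n\delta_{n+1}+\delta_{n+1}\delta_{n+2}-\frac{\mu_{n+2}}{\mu_{n+1}}\delta_{n+1}\delta_{n+2}-\frac{\mu_{n-1}}{\mu_n}\delta_n\delta_{n+1}-\frac{\mu_{n+1}}{\mu_n g_{n-1}}\delta_n\delta_{n+1}\Big].$$ Then for every $n\in\mathbb{N}$, $p_np_{n+1}<g_n<p_np_{n+1}p_{n+2}$ (in particular every $g_n$ is well defined and positive). *)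

theory Defs
  imports Complex_Main
begin

definition delta :: "nat \<Rightarrow> real" where
  "delta n = (real n + 2) / (real n + 1)"

definition mu :: "nat \<Rightarrow> real" where
  "mu n = real n powr (3/2)"

definition p :: "nat \<Rightarrow> real" where
  "p n = mu (n+1) / mu n"

text \<open>g is only meaningful for n \<ge> 1; the value at 0 is an unused placeholder.\<close>
fun g :: "nat \<Rightarrow> real" where
  "g 0 = 0"
| "g (Suc 0) = mu 2 / mu 1 * (2 * delta 2 / delta 3 + delta 1 / delta 3 + 1) - mu 3 / mu 1"
| "g (Suc (Suc m)) = (let n = Suc (Suc m) in
     mu (n+1) / (mu n * delta (n+1) * delta (n+2)) *
     (2 * (delta (n+1))^2 + delta n * delta (n+1) + delta (n+1) * delta (n+2)
      - mu (n+2) / mu (n+1) * delta (n+1) * delta (n+2)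
      - mu (n-1) / mu n * delta n * delta (n+1)
      - mu (n+1) / (mu n * g (n-1)) * delta n * delta (n+1)))"

end

theory Submission
  imports Defs
begin

text \<open>
  Dividing the recursion by \<open>\<delta>\<^sub>n\<^sub>+\<^sub>1\<close> gives
  \<open>g\<^sub>n = p\<^sub>n/\<delta>\<^sub>n\<^sub>+\<^sub>2 \<cdot> (2\<delta>\<^sub>n\<^sub>+\<^sub>1 + \<delta>\<^sub>n + \<delta>\<^sub>n\<^sub>+\<^sub>2 - p\<^sub>n\<^sub>+\<^sub>1\<delta>\<^sub>n\<^sub>+\<^sub>2 - \<delta>\<^sub>n/p\<^sub>n\<^sub>-\<^sub>1 - p\<^sub>n\<delta>\<^sub>n/g\<^sub>n\<^sub>-\<^sub>1)\<close>,
  in which \<open>g\<^sub>n\<^sub>-\<^sub>1\<close> enters only through \<open>p\<^sub>n/g\<^sub>n\<^sub>-\<^sub>1\<close>. The bounds for \<open>g\<^sub>n\<^sub>-\<^sub>1\<close> place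
  this quotient strictly between \<open>1/(p\<^sub>n\<^sub>-\<^sub>1p\<^sub>n\<^sub>+\<^sub>1)\<close> and \<open>1/p\<^sub>n\<^sub>-\<^sub>1\<close>, so the bounds
  for \<open>g\<^sub>n\<close> follow by induction once two inequalities between the \<open>\<delta>\<close>'s and \<open>p\<close>'s,
  free of \<open>g\<close>, are known. All quantities involved are of the form \<open>(1 \<plusminus> 1/k)\<^bsup>3/2\<^esup>\<close> or
  \<open>(1 + 2/k)\<^bsup>3/2\<^esup>\<close>; replacing them by their second order Taylor polynomial, corrected
  by a cubic error term in the appropriate direction, turns both inequalities into
  rational inequalities in \<open>n\<close> whose numerators, written in \<open>n - 2\<close>, have positive
  coefficients.
\<close>

definition taylor_three_halves :: "real \<Rightarrow> real" where
  "taylor_three_halves x = 1 + 3/2 * x + 3/8 * x^2"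

lemma taylor_three_halves_nonneg: "-2/3 \<le> x \<Longrightarrow> 0 \<le> taylor_three_halves x"
  unfolding taylor_three_halves_def using zero_le_power2[of x] by linarith

lemma powr_three_halves_eq_sqrt: "0 \<le> t \<Longrightarrow> t powr (3/2) = sqrt (t^3)"
  using powr_half_sqrt_powr[of t 3] powr_realpow'[of t 3] by simp

lemma one_plus_powr_three_halves_le:
  fixes x :: real
  assumes "0 \<le> x"
  shows "(1 + x) powr (3/2) \<le> taylor_three_halves x"
proof -
  have "(taylor_three_halves x)^2 = (1 + x)^3 + x^3/8 + 9/64 * x^4"
    unfolding taylor_three_halves_def
    by (simp add: power2_eq_square power3_eq_cube power4_eq_xxxx algebra_simps)
  then have "(1 + x)^3 \<le> (taylor_three_halves x)^2"
    using assms by simp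
  with assms show ?thesis
    by (simp add: powr_three_halves_eq_sqrt real_le_lsqrt taylor_three_halves_nonneg)
qed

lemma one_plus_powr_three_halves_ge:
  fixes x :: real
  assumes "0 \<le> x" "x \<le> 1"
  shows "taylor_three_halves x - x^3/16 \<le> (1 + x) powr (3/2)"
proof -
  have "(taylor_three_halves x - x^3/16)^2 = (1 + x)^3 - x^4 * (3/64 + 3/64 * x - x^2/256)"
    unfolding taylor_three_halves_def
    by (simp add: power2_eq_square power3_eq_cube power4_eq_xxxx algebra_simps)
  moreover have "x^2 \<le> 1"
    using assms by (simp add: power_le_one)
  ultimately have "(taylor_three_halves x - x^3/16)^2 \<le> (1 + x)^3"
    using assms by simp
  with assms show ?thesis
    by (simp add: powr_three_halves_eq_sqrt real_le_rsqrt)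
qed

lemma one_minus_powr_three_halves_ge:
  fixes y :: real
  assumes "0 \<le> y" "y \<le> 1/2"
  shows "taylor_three_halves (- y) \<le> (1 - y) powr (3/2)"
proof -
  have "(taylor_three_halves (- y))^2 = (1 - y)^3 - y^3 * (1/8 - 9/64 * y)"
    unfolding taylor_three_halves_def
    by (simp add: power2_eq_square power3_eq_cube power4_eq_xxxx algebra_simps)
  then have "(taylor_three_halves (- y))^2 \<le> (1 - y)^3"
    using assms by simp
  with assms show ?thesis
    by (simp add: powr_three_halves_eq_sqrt real_le_rsqrt)
qed

lemma one_minus_powr_three_halves_le:
  fixes y :: real
  assumes "0 \<le> y" "y \<le> 1/2"
  shows "(1 - y) powr (3/2) \<le> taylor_three_halves (- y) + y^3/8"
proof -
  have "(taylor_three_halves (- y) + y^3/8)^2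
        = (1 - y)^3 + y^3 * (1/8 - 15/64 * y + 3/32 * y^2 + y^3/64)"
    unfolding taylor_three_halves_def
    by (simp add: power2_eq_square power3_eq_cube power4_eq_xxxx algebra_simps)
  then have "(1 - y)^3 \<le> (taylor_three_halves (- y) + y^3/8)^2"
    using assms by simp
  moreover have "0 \<le> taylor_three_halves (- y) + y^3/8"
    using assms taylor_three_halves_nonneg[of "- y"] by simp
  ultimately show ?thesis
    using assms by (simp add: powr_three_halves_eq_sqrt real_le_lsqrt)
qed

lemma taylor_margin_lower:
  fixes m :: real
  assumes "0 \<le> m"
  shows "2 * taylor_three_halves (1/(m+3)) * ((m+6)/(m+5))
           + 2 * ((m+4)/(m+3)) * (taylor_three_halves (- (1/(m+2))) + (1/(m+2))^3/8)
         \<le> 2 * ((m+5)/(m+4)) + (m+4)/(m+3) + (m+6)/(m+5)" (is "?L \<le> ?R")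
proof -
  \<comment> \<open>Opaque names for the shifted denominators keep \<open>field_simps\<close> from expanding them.\<close>
  obtain a b c d e where shifts: "m+2 = a" "m+3 = b" "m+4 = c" "m+5 = d" "m+6 = e"
    by blast
  have "a \<noteq> 0" "b \<noteq> 0" "c \<noteq> 0" "d \<noteq> 0"
    using assms shifts by auto
  then have "?R - ?L = (540 + 990*m + 2671/4*m^2 + 827/4*m^3 + 117/4*m^4 + 3/2*m^5)
                       / (a^3 * b^2 * c * d)"
    unfolding taylor_three_halves_def shifts by (simp add: field_simps) (use shifts in algebra)
  also have "\<dots> \<ge> 0"
    using assms shifts by simp
  finally show ?thesis by simp
qed

lemma taylor_margin_upper:
  fixes m :: real
  assumes "0 \<le> m"
  shows "2 * ((m+5)/(m+4)) + (m+4)/(m+3) + (m+6)/(m+5)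
         \<le> (taylor_three_halves (1/(m+3)) - (1/(m+3))^3/16) * ((m+6)/(m+5))
           + ((m+4)/(m+3)) * taylor_three_halves (- (1/(m+2)))
           + ((m+4)/(m+3)) * (taylor_three_halves (- (1/(m+2))) * taylor_three_halves (- (1/(m+4))))
           + (taylor_three_halves (2/(m+3)) - (2/(m+3))^3/16) * ((m+6)/(m+5))" (is "?L \<le> ?R")
proof -
  obtain a b c d e where shifts: "m+2 = a" "m+3 = b" "m+4 = c" "m+5 = d" "m+6 = e"
    by blast
  have "a \<noteq> 0" "b \<noteq> 0" "c \<noteq> 0" "d \<noteq> 0"
    using assms shifts by auto
  then have "?R - ?L = (20349/16 + 208569/64*m + 212219/64*m^2 + 109231/64*m^3
                        + 30121/64*m^4 + 1061/16*m^5 + 15/4*m^6) / (a^2 * b^3 * c^2 * d)"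
    unfolding taylor_three_halves_def shifts by (simp add: field_simps) (use shifts in algebra)
  also have "\<dots> \<ge> 0"
    using assms shifts by simp
  finally show ?thesis by simp
qed

lemma mu_divide: "mu u / mu v = (real u / real v) powr (3/2)"
  by (simp add: mu_def powr_divide)

lemma mu_pos: "0 < k \<Longrightarrow> 0 < mu k"
  by (simp add: mu_def)

lemma mu_eq_sqrt: "mu k = real k * sqrt (real k)"
proof -
  have "real k ^ 3 = (real k)^2 * real k"
    by (simp add: power2_eq_square power3_eq_cube)
  then show ?thesis
    by (simp add: mu_def powr_three_halves_eq_sqrt real_sqrt_mult)
qed

lemma p_pos: "0 < k \<Longrightarrow> 0 < p k"
  by (simp add: p_def mu_pos)

lemma delta_pos: "0 < delta k"
  by (simp add: delta_def)

lemma p_eq_powr: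
  assumes "0 < k"
  shows "p k = (1 + 1 / real k) powr (3/2)"
proof -
  have "real (k+1) / real k = 1 + 1 / real k"
    using assms by (simp add: field_simps)
  then show ?thesis
    by (simp only: p_def mu_divide)
qed

lemma inverse_p_eq_powr: "1 / p k = (1 - 1 / (real k + 1)) powr (3/2)"
proof -
  have "real k / real (k+1) = 1 - 1 / (real k + 1)"
    by (simp add: field_simps)
  moreover have "1 / p k = mu k / mu (k+1)"
    by (simp add: p_def)
  ultimately show ?thesis
    by (simp only: mu_divide)
qed

lemma p_mult_p_Suc:
  assumes "0 < k"
  shows "p k * p (k+1) = (1 + 2 / real k) powr (3/2)"
proof -
  have "real (k+2) / real k = 1 + 2 / real k"
    using assms by (simp add: field_simps)
  moreover have "p k * p (k+1) = mu (k+2) / mu k"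
    using mu_pos[of "k+1"] by (simp add: p_def)
  ultimately show ?thesis
    by (simp only: mu_divide)
qed

lemma g_recurrence:
  assumes "2 \<le> n"
  shows "g n = p n / delta (n+2) *
    (2 * delta (n+1) + delta n + delta (n+2)
     - p (n+1) * delta (n+2) - delta n / p (n-1) - p n * delta n / g (n-1))"
proof -
  obtain k where n: "n = Suc (Suc k)"
    using assms by (metis add_2_eq_Suc le_Suc_ex)
  have "mu n > 0" "mu (n+1) > 0" "mu (n-1) > 0"
    using n by (simp_all add: mu_pos)
  moreover have "delta (n+1) > 0" "delta (n+2) > 0"
    by (simp_all add: delta_pos)
  ultimately show ?thesis
    using n by (simp add: Let_def p_def field_simps power2_eq_square)
qed

lemma recurrence_bounds_step:
  fixes a b c e d0 d1 d2 G :: real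
  assumes pos: "0 < a" "0 < b" "0 < c" "0 < e" "0 < d0" "0 < d2"
    and G: "a * b < G" "G < a * b * c"
    and lower: "2 * c * d2 + 2 * d0 / a \<le> 2 * d1 + d0 + d2"
    and upper: "2 * d1 + d0 + d2 \<le> c * d2 + d0 / a + d0 / (a * c) + c * e * d2"
  defines "J \<equiv> 2 * d1 + d0 + d2 - c * d2 - d0 / a - b * d0 / G"
  shows "b * c < b / d2 * J \<and> b / d2 * J < b * c * e"
proof -
  have "0 < G"
    using G pos by (smt (verit) mult_pos_pos)
  have "b / G < 1 / a" and "1 / (a * c) < b / G"
    using G pos \<open>0 < G\<close> by (simp_all add: field_simps)
  then have "b / G * d0 < 1 / a * d0" and "1 / (a * c) * d0 < b / G * d0"
    using pos by (simp_all only: mult_strict_right_mono)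
  then have "b * d0 / G < d0 / a" and "d0 / (a * c) < b * d0 / G"
    by simp_all
  then have "c * d2 < J" and "J < c * e * d2"
    using lower upper unfolding J_def by linarith+
  then show ?thesis
    using pos by (simp add: field_simps)
qed

lemma delta_p_margin_lower:
  assumes "2 \<le> n"
  shows "2 * p (n+1) * delta (n+2) + 2 * delta n / p (n-1) \<le> 2 * delta (n+1) + delta n + delta (n+2)"
proof -
  define m where "m = real n - 2"
  have "0 \<le> m" and n: "real n = m + 2"
    using assms by (simp_all add: m_def)
  have deltas: "delta n = (m+4)/(m+3)" "delta (n+1) = (m+5)/(m+4)" "delta (n+2) = (m+6)/(m+5)"
    by (simp_all add: delta_def n field_simps)
  have shifted: "real (n+1) = m + 3" "real (n-1) + 1 = m + 2"
    using assms by (simp_all add: n of_nat_diff)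
  have p_upper: "p (n+1) \<le> taylor_three_halves (1/(m+3))"
    using p_eq_powr[of "n+1"] one_plus_powr_three_halves_le[of "1/(m+3)"] \<open>0 \<le> m\<close>
    unfolding shifted by simp
  have inv_p_upper: "1 / p (n-1) \<le> taylor_three_halves (- (1/(m+2))) + (1/(m+2))^3/8"
    using inverse_p_eq_powr[of "n-1"] one_minus_powr_three_halves_le[of "1/(m+2)"] \<open>0 \<le> m\<close>
    unfolding shifted by simp
  have "p (n+1) * delta (n+2) \<le> taylor_three_halves (1/(m+3)) * delta (n+2)"
    by (rule mult_right_mono[OF p_upper]) (simp add: less_imp_le delta_pos)
  moreover have "delta n / p (n-1) \<le> delta n * (taylor_three_halves (- (1/(m+2))) + (1/(m+2))^3/8)"
    using mult_left_mono[OF inv_p_upper, of "delta n"] by (simp add: less_imp_le delta_pos)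
  ultimately show ?thesis
    using taylor_margin_lower[OF \<open>0 \<le> m\<close>] unfolding deltas by linarith
qed

lemma delta_p_margin_upper:
  assumes "2 \<le> n"
  shows "2 * delta (n+1) + delta n + delta (n+2)
         \<le> p (n+1) * delta (n+2) + delta n / p (n-1) + delta n / (p (n-1) * p (n+1))
           + p (n+1) * p (n+2) * delta (n+2)"
proof -
  define m where "m = real n - 2"
  have "0 \<le> m" and n: "real n = m + 2"
    using assms by (simp_all add: m_def)
  have deltas: "delta n = (m+4)/(m+3)" "delta (n+1) = (m+5)/(m+4)" "delta (n+2) = (m+6)/(m+5)"
    by (simp_all add: delta_def n field_simps)
  have shifted: "real (n+1) = m + 3" "real (n-1) + 1 = m + 2" "real (n+1) + 1 = m + 4"
    using assms by (simp_all add: n of_nat_diff)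
  have p_lower: "taylor_three_halves (1/(m+3)) - (1/(m+3))^3/16 \<le> p (n+1)"
    using p_eq_powr[of "n+1"] one_plus_powr_three_halves_ge[of "1/(m+3)"] \<open>0 \<le> m\<close>
    unfolding shifted by simp
  have pp_lower: "taylor_three_halves (2/(m+3)) - (2/(m+3))^3/16 \<le> p (n+1) * p (n+2)"
    using p_mult_p_Suc[of "n+1"] one_plus_powr_three_halves_ge[of "2/(m+3)"] \<open>0 \<le> m\<close>
    unfolding shifted by simp
  have inv_p_lower: "taylor_three_halves (- (1/(m+2))) \<le> 1 / p (n-1)"
    using inverse_p_eq_powr[of "n-1"] one_minus_powr_three_halves_ge[of "1/(m+2)"] \<open>0 \<le> m\<close>
    unfolding shifted by simp
  have inv_p_Suc_lower: "taylor_three_halves (- (1/(m+4))) \<le> 1 / p (n+1)"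
    using inverse_p_eq_powr[of "n+1"] one_minus_powr_three_halves_ge[of "1/(m+4)"] \<open>0 \<le> m\<close>
    unfolding shifted(3) by simp
  have "taylor_three_halves (- (1/(m+2))) * taylor_three_halves (- (1/(m+4)))
        \<le> 1 / (p (n-1) * p (n+1))"
  proof -
    have "0 \<le> taylor_three_halves (- (1/(m+4)))"
      using \<open>0 \<le> m\<close> by (intro taylor_three_halves_nonneg) (simp add: field_simps)
    then show ?thesis
      using mult_mono[OF inv_p_lower inv_p_Suc_lower] p_pos[of "n-1"] assms by simp
  qed
  from mult_left_mono[OF this, of "delta n"]
  have "delta n * (taylor_three_halves (- (1/(m+2))) * taylor_three_halves (- (1/(m+4))))
        \<le> delta n / (p (n-1) * p (n+1))"
    by (simp add: less_imp_le delta_pos)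
  moreover have "(taylor_three_halves (1/(m+3)) - (1/(m+3))^3/16) * delta (n+2)
        \<le> p (n+1) * delta (n+2)"
    by (rule mult_right_mono[OF p_lower]) (simp add: less_imp_le delta_pos)
  moreover have "(taylor_three_halves (2/(m+3)) - (2/(m+3))^3/16) * delta (n+2)
        \<le> p (n+1) * p (n+2) * delta (n+2)"
    by (rule mult_right_mono[OF pp_lower]) (simp add: less_imp_le delta_pos)
  moreover have "delta n * taylor_three_halves (- (1/(m+2))) \<le> delta n / p (n-1)"
    using mult_left_mono[OF inv_p_lower, of "delta n"] by (simp add: less_imp_le delta_pos)
  ultimately show ?thesis
    using taylor_margin_upper[OF \<open>0 \<le> m\<close>] unfolding deltas by linarith
qed

lemma g_bounds_one: "p 1 * p 2 < g 1 \<and> g 1 < p 1 * p 2 * p 3"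
proof -
  have "sqrt 4 = (2::real)"
    by (simp add: real_sqrt_eq_iff)
  then have p12: "p 1 * p 2 = 3 * sqrt 3" and p123: "p 1 * p 2 * p 3 = 8"
    by (simp_all add: p_def mu_eq_sqrt)
  have g1: "g 1 = 26/3 * sqrt 2 - 3 * sqrt 3"
    by (simp add: mu_eq_sqrt delta_def)
  have "1.414 < sqrt (2::real)" "1.732 < sqrt (3::real)"
    by (rule real_less_rsqrt, simp add: power2_eq_square)+
  moreover have "sqrt (2::real) < 1.415" "sqrt (3::real) < 1.733"
    by (rule real_less_lsqrt, simp, simp add: power2_eq_square)+
  ultimately have "3 * sqrt 3 < g 1" and "g 1 < 8"
    unfolding g1 by simp_all
  with p12 p123 show ?thesis
    by linarith
qed

theorem lemma4p2:
  fixes n :: nat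
  assumes "n \<ge> 1"
  shows "p n * p (n+1) < g n \<and> g n < p n * p (n+1) * p (n+2)"
  using assms
proof (induction n rule: nat_induct_at_least)
  case base
  have "(1::nat) + 1 = 2" "(1::nat) + 2 = 3"
    by simp_all
  then show ?case
    using g_bounds_one by (simp only:)
next
  case (Suc k)
  let ?n = "Suc k"
  have n: "2 \<le> ?n"
    using Suc.hyps by simp
  have IH: "p (?n-1) * p ?n < g (?n-1)" "g (?n-1) < p (?n-1) * p ?n * p (?n+1)"
    using Suc.IH by simp_all
  show ?case
    unfolding g_recurrence[OF n]
    by (rule recurrence_bounds_step)
      (use Suc.hyps IH delta_p_margin_lower[OF n] delta_p_margin_upper[OF n] in \<open>simp_all add: p_pos delta_pos\<close>)
qed

end
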